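(* Let $g$ be an entire function, $\delta\neq0$, $x_1,\dots,x_k\in\mathbb C$, and $0<r<R$ with $|\delta|r<R-r$. Let $G(z,w)=(g(z)-\delta w,z)$. Let $i,\ell,j\in\{1,\dots,k\}$ be such that there is a domain $W\subset\mathbb D_r(x_i)$ mapped by $g$ biholomorphically onto $\mathbb D_R(x_j+\delta x_\ell)$. Then for every $(i,\ell)$-disk $D$ there exists a holomorphic disk $V\subset D$ (of the form $V=D\cap(\tilde W\times\mathbb C)$ for a domain $\tilde W\subset W$) such that $G(V)$ is a $(j,i)$-disk.
   Context: $\mathbb D_\rho(a)$ denotes the open disk of radius $\rho$ centered at $a$, and $\pi_w(z,w)=w$. For $i,\ell\in\{1,\dots,k\}$, an $(i,\ell)$-disk is a set $D=\{(z,\phi(z)):z\in\mathbb D_r(x_i)\}\subset\mathbb C^2$ where $\phi$ is holomorphic on $\mathbb D_r(x_i)$ (a holomorphic graph over $\mathbb D_r(x_i)$ in the $z$-coordinate), such that $\pi_w(D)\subset\mathbb D_r(x_\ell)$. *)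

theory Defs
  imports "HOL-Complex_Analysis.Complex_Analysis"
begin

definition il_disk :: "(nat \<Rightarrow> complex) \<Rightarrow> real \<Rightarrow> nat \<Rightarrow> nat \<Rightarrow> (complex \<times> complex) set \<Rightarrow> bool" where
  "il_disk x r i l D \<longleftrightarrow>
     (\<exists>\<phi>. \<phi> holomorphic_on ball (x i) r \<and>
          D = (\<lambda>z. (z, \<phi> z)) ` ball (x i) r \<and>
          snd ` D \<subseteq> ball (x l) r)"

definition domain :: "complex set \<Rightarrow> bool" where
  "domain U \<longleftrightarrow> open U \<and> connected U \<and> U \<noteq> {}"

definition biholo_onto :: "(complex \<Rightarrow> complex) \<Rightarrow> complex set \<Rightarrow> complex set \<Rightarrow> bool" where
  "biholo_onto g U T \<longleftrightarrow> g holomorphic_on U \<and> g ` U = T \<and>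
     (\<exists>h. h holomorphic_on T \<and> h ` T = U \<and> (\<forall>z\<in>U. h (g z) = z) \<and> (\<forall>w\<in>T. g (h w) = w))"

definition holo_disk :: "(complex \<times> complex) set \<Rightarrow> bool" where
  "holo_disk V \<longleftrightarrow> (\<exists>U \<phi>. domain U \<and> \<phi> holomorphic_on U \<and> V = (\<lambda>z. (z, \<phi> z)) ` U)"

end

theory Submission imports Defs begin

(* Write D as the graph of phi and put psi z = g z - delta * phi z. For w in D_r(x_j), the
   substitution u = g z turns psi z = w into the fixed point equation u = w + delta * phi (g^-1 u)
   on the disc D_R(x_j + delta x_l). Its right-hand side maps that disc into the concentric closed
   disc of radius |w - x_j| + |delta| r < R, so it has a fixed point by Brouwer, and only one by the
   Schwarz lemma. Hence psi is a bijection from W' = W \<inter> psi^-1 (D_r(x_j)) onto D_r(x_j) with a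
   holomorphic inverse kappa, and G maps the part of D over W' onto the graph of kappa. *)

lemma holomorphic_disc_map_fixpoint_unique:
  fixes F :: "complex \<Rightarrow> complex"
  assumes holF: "F holomorphic_on ball 0 1" and K: "compact K" "K \<subseteq> ball 0 1"
    and FK: "F ` ball 0 1 \<subseteq> K"
    and a: "a \<in> ball 0 1" and b: "b \<in> ball 0 1" and Fa: "F a = a" and Fb: "F b = b"
  shows "a = b"
proof -
  define M where "M = Moebius_function 0 a"
  define N where "N = Moebius_function 0 (-a)"
  have na: "norm a < 1" and nb: "norm b < 1" using a b by simp_all
  have holM: "M holomorphic_on ball 0 1" and holN: "N holomorphic_on ball 0 1"
    unfolding M_def N_def using Moebius_function_holomorphic na by simp_all
  have N_in: "N z \<in> ball 0 1" if "z \<in> ball 0 1" for z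
    unfolding N_def using Moebius_function_norm_lt_1[of "-a" z] na that by simp
  have contM: "continuous_on K (\<lambda>z. norm (M z))"
    by (intro continuous_intros holomorphic_on_imp_continuous_on holomorphic_on_subset[OF holM K(2)])
  obtain z0 where z0: "z0 \<in> K" and z0_max: "\<forall>y\<in>K. norm (M y) \<le> norm (M z0)"
    using continuous_attains_sup[OF K(1) _ contM] FK a by blast
  define m where "m = (1 + norm (M z0)) / 2"
  have "norm (M z0) < 1"
    unfolding M_def using Moebius_function_norm_lt_1[OF na] z0 K(2) by auto
  then have m: "0 < m" "m < 1" "norm (M z0) < m" unfolding m_def by (auto intro: add_pos_nonneg)
  \<comment> \<open>\<open>F\<close> conjugated so that \<open>a\<close> becomes 0, then enlarged by \<open>1 / m > 1\<close>: still a self-map of the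
      disc fixing 0, so by Schwarz its point \<open>M b\<close>, which it moves to \<open>M b / m\<close>, must be 0.\<close>
  define H where "H = (\<lambda>z. M (F (N z)) / m)"
  have holH: "H holomorphic_on ball 0 1"
  proof -
    have "F (N z) \<in> ball 0 1" if "z \<in> ball 0 1" for z using FK K(2) N_in[OF that] by blast
    then have "(M \<circ> (F \<circ> N)) holomorphic_on ball 0 1"
      using N_in by (intro holomorphic_on_compose_gen[OF holomorphic_on_compose_gen[OF holN holF] holM])
        (auto simp: image_subset_iff)
    then show ?thesis unfolding H_def using m by (auto intro!: holomorphic_intros simp: o_def)
  qed
  have N0: "N 0 = a" unfolding N_def by (simp add: Moebius_function_of_zero)
  have H0: "H 0 = 0" unfolding H_def M_def using N0 Fa by (simp add: Moebius_function_eq_zero)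
  have H_lt: "norm (H z) < 1" if "norm z < 1" for z
  proof -
    have "norm (M (F (N z))) < m" using z0_max FK N_in that m by fastforce
    then show ?thesis unfolding H_def using m by (simp add: norm_divide)
  qed
  have NM: "N (M b) = b" unfolding N_def M_def using Moebius_function_compose[of "-a" a b] na nb by simp
  have "norm (M b) < 1" unfolding M_def using Moebius_function_norm_lt_1[OF na nb] by simp
  then have "norm (H (M b)) \<le> norm (M b)" using Schwarz_Lemma(1)[OF holH H0 H_lt] by simp
  moreover have "H (M b) = M b / m" unfolding H_def using NM Fb by simp
  ultimately have "norm (M b) \<le> norm (M b) * m" using m by (simp add: norm_divide divide_le_eq)
  then have "M b = 0" using m mult_le_cancel_left1[of "norm (M b)" m] by simp
  then show ?thesis using NM N0 by simp
qed

lemma holomorphic_ball_map_fixpoint_unique: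
  fixes f :: "complex \<Rightarrow> complex"
  assumes holf: "f holomorphic_on ball c R" and fim: "f ` ball c R \<subseteq> cball c \<rho>" and "\<rho> < R"
    and a: "a \<in> ball c R" and b: "b \<in> ball c R" and fa: "f a = a" and fb: "f b = b"
  shows "a = b"
proof -
  have R: "0 < R" using a by (metis mem_ball zero_le_dist le_less_trans)
  define s :: "complex \<Rightarrow> complex" where "s = (\<lambda>z. c + of_real R * z)"
  define F where "F = (\<lambda>z. (f (s z) - c) / of_real R)"
  have s_in: "s z \<in> ball c R" if "z \<in> ball 0 1" for z
    using that R by (simp add: s_def dist_norm norm_mult)
  have "(f \<circ> s) holomorphic_on ball 0 1"
    by (rule holomorphic_on_compose_gen[OF _ holf]) (use s_in in \<open>auto simp: s_def intro!: holomorphic_intros\<close>)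
  then have holF: "F holomorphic_on ball 0 1"
    unfolding F_def using R by (auto intro!: holomorphic_intros simp: o_def)
  have FK: "F ` ball 0 1 \<subseteq> cball 0 (\<rho> / R)"
  proof (clarsimp)
    fix z :: complex assume "norm z < 1"
    then have "dist c (f (s z)) \<le> \<rho>" using fim s_in by force
    then show "norm (F z) \<le> \<rho> / R"
      using R by (simp add: F_def norm_divide dist_norm norm_minus_commute divide_right_mono)
  qed
  have K: "cball 0 (\<rho> / R) \<subseteq> ball (0::complex) 1"
    using \<open>\<rho> < R\<close> R by (simp add: cball_subset_ball_iff divide_less_eq)
  have "(a - c) / of_real R = (b - c) / of_real R"
  proof (rule holomorphic_disc_map_fixpoint_unique[OF holF compact_cball K FK])
    show "(a - c) / of_real R \<in> ball 0 1" "(b - c) / of_real R \<in> ball 0 1"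
      using a b R by (auto simp: dist_norm norm_divide norm_minus_commute)
    show "F ((a - c) / of_real R) = (a - c) / of_real R" "F ((b - c) / of_real R) = (b - c) / of_real R"
      using R fa fb by (simp_all add: F_def s_def)
  qed
  then show ?thesis using R by simp
qed

lemma continuous_ball_map_has_fixpoint:
  fixes f :: "'a::euclidean_space \<Rightarrow> 'a"
  assumes "continuous_on (ball c R) f" and fim: "f ` ball c R \<subseteq> cball c \<rho>"
    and "0 \<le> \<rho>" and "\<rho> < R"
  obtains u where "u \<in> cball c \<rho>" and "f u = u"
proof (rule brouwer[OF compact_cball convex_cball])
  have "cball c \<rho> \<subseteq> ball c R" using \<open>\<rho> < R\<close> by auto
  then show "continuous_on (cball c \<rho>) f" and "f \<in> cball c \<rho> \<rightarrow> cball c \<rho>"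
    using continuous_on_subset[OF assms(1)] fim by auto
qed (use \<open>0 \<le> \<rho>\<close> in auto)

lemma holomorphic_inverse_on_unique_preimages:
  assumes holf: "f holomorphic_on S" and "open S" "open T"
    and uniq: "\<And>w. w \<in> T \<Longrightarrow> \<exists>!z\<in>S. f z = w"
  obtains g where "g holomorphic_on T" "\<And>w. w \<in> T \<Longrightarrow> f (g w) = w" "g ` T = S \<inter> f -` T"
proof -
  define U where "U = S \<inter> f -` T"
  have "open U"
    unfolding U_def using holomorphic_on_imp_continuous_on[OF holf] \<open>open S\<close> \<open>open T\<close>
    by (rule continuous_open_preimage)
  moreover have "inj_on f U"
  proof (rule inj_onI)
    fix z z' assume "z \<in> U" "z' \<in> U" "f z = f z'"
    then show "z = z'" using uniq[of "f z"] by (auto simp: U_def)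
  qed
  moreover have "f holomorphic_on U" using holf by (rule holomorphic_on_subset) (simp add: U_def)
  ultimately obtain g where holg: "g holomorphic_on f ` U" and gf: "\<And>z. z \<in> U \<Longrightarrow> g (f z) = z"
    using holomorphic_has_inverse by metis
  have fU: "f ` U = T"
  proof
    show "T \<subseteq> f ` U"
    proof
      fix w assume "w \<in> T"
      then obtain z where "z \<in> S" "f z = w" using uniq by blast
      then show "w \<in> f ` U" using \<open>w \<in> T\<close> by (auto simp: U_def)
    qed
  qed (auto simp: U_def)
  have "g ` T = U" unfolding fU[symmetric] image_image using gf by simp
  moreover have "f (g w) = w" if "w \<in> T" for w using gf that unfolding fU[symmetric] by auto
  ultimately show thesis using that holg fU by (simp add: U_def)
qed

lemma biholo_onto_perturbed_equation_unique_solution: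
  assumes "biholo_onto g W (ball (b + \<delta> * a) R)"
    and hol\<phi>: "\<phi> holomorphic_on W" and \<phi>_im: "\<phi> ` W \<subseteq> cball a s" and "0 \<le> s"
    and w: "dist b w + norm \<delta> * s < R"
  shows "\<exists>!z\<in>W. g z - \<delta> * \<phi> z = w"
proof -
  define c where "c = b + \<delta> * a"
  define \<rho> where "\<rho> = dist b w + norm \<delta> * s"
  have \<rho>: "0 \<le> \<rho>" "\<rho> < R" using \<open>0 \<le> s\<close> w by (simp_all add: \<rho>_def)
  obtain h where holh: "h holomorphic_on ball c R" and hB: "h ` ball c R = W"
    and hg: "\<And>z. z \<in> W \<Longrightarrow> h (g z) = z" and gh: "\<And>u. u \<in> ball c R \<Longrightarrow> g (h u) = u"
    and gW: "g ` W = ball c R"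
    using assms(1) unfolding biholo_onto_def c_def by blast
  define f where "f = (\<lambda>u. w + \<delta> * \<phi> (h u))"
  have "(\<lambda>u. \<phi> (h u)) holomorphic_on ball c R"
    using holomorphic_on_compose_gen[OF holh hol\<phi>] hB by (simp add: o_def)
  then have holf: "f holomorphic_on ball c R" unfolding f_def by (intro holomorphic_intros)
  have f_im: "f ` ball c R \<subseteq> cball c \<rho>"
  proof (rule image_subsetI)
    fix u assume "u \<in> ball c R"
    then have "h u \<in> W" using hB by blast
    then have \<phi>_hu: "dist a (\<phi> (h u)) \<le> s" using \<phi>_im by (simp add: image_subset_iff)
    have "dist c (f u) = norm ((b - w) + \<delta> * (a - \<phi> (h u)))"
      unfolding dist_norm c_def f_def by (rule arg_cong[where f = norm]) (simp add: algebra_simps)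
    also have "\<dots> \<le> norm (b - w) + norm \<delta> * norm (a - \<phi> (h u))"
      by (rule order_trans[OF norm_triangle_ineq]) (simp add: norm_mult)
    also have "\<dots> \<le> \<rho>"
      using mult_left_mono[OF \<phi>_hu norm_ge_zero[of \<delta>]] by (simp add: \<rho>_def dist_norm)
    finally show "f u \<in> cball c \<rho>" by simp
  qed
  have fix_of_solution: "g z \<in> ball c R \<and> f (g z) = g z" if "z \<in> W" "g z - \<delta> * \<phi> z = w" for z
    using that gW hg by (auto simp: f_def)
  have "\<exists>z\<in>W. g z - \<delta> * \<phi> z = w"
  proof -
    obtain u where u: "u \<in> cball c \<rho>" "f u = u"
      using continuous_ball_map_has_fixpoint[OF holomorphic_on_imp_continuous_on[OF holf] f_im \<rho>] by blast
    then have "u \<in> ball c R" using \<rho>(2) by simp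
    then have "h u \<in> W" "g (h u) = u" using hB gh by auto
    moreover have "g (h u) - \<delta> * \<phi> (h u) = w"
      using u(2) \<open>g (h u) = u\<close> unfolding f_def by (metis add_diff_cancel_right')
    ultimately show ?thesis by blast
  qed
  moreover have "z1 = z2" if "z1 \<in> W" "g z1 - \<delta> * \<phi> z1 = w" "z2 \<in> W" "g z2 - \<delta> * \<phi> z2 = w" for z1 z2
  proof -
    have "g z1 = g z2"
      using holomorphic_ball_map_fixpoint_unique[OF holf f_im \<rho>(2)]
        fix_of_solution[OF that(1,2)] fix_of_solution[OF that(3,4)] by blast
    then show ?thesis using hg that(1,3) by metis
  qed
  ultimately show ?thesis by blast
qed

lemma graph_image_eq_inverse_graph:
  assumes "\<kappa> ` T = S" and "\<And>w. w \<in> T \<Longrightarrow> \<psi> (\<kappa> w) = w"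
  shows "(\<lambda>z. (\<psi> z, z)) ` S = (\<lambda>w. (w, \<kappa> w)) ` T"
  unfolding assms(1)[symmetric] image_image using assms(2) by simp

lemma biholo_onto_graph_transform:
  assumes bih: "biholo_onto g W (ball (b + \<delta> * a) R)" and "open W"
    and hol\<phi>: "\<phi> holomorphic_on W" and \<phi>_im: "\<phi> ` W \<subseteq> cball a s" and "0 \<le> s"
    and "0 < t" and t: "t + norm \<delta> * s \<le> R"
  obtains W' \<kappa> where "domain W'" "W' \<subseteq> W" "\<kappa> holomorphic_on ball b t"
    "(\<lambda>z. (g z - \<delta> * \<phi> z, z)) ` W' = (\<lambda>w. (w, \<kappa> w)) ` ball b t"
proof -
  define \<psi> where "\<psi> = (\<lambda>z. g z - \<delta> * \<phi> z)"
  have hol\<psi>: "\<psi> holomorphic_on W"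
    unfolding \<psi>_def using bih hol\<phi> by (auto simp: biholo_onto_def intro!: holomorphic_intros)
  have uniq: "\<exists>!z\<in>W. \<psi> z = w" if "w \<in> ball b t" for w
    unfolding \<psi>_def using that t
    by (intro biholo_onto_perturbed_equation_unique_solution[OF bih hol\<phi> \<phi>_im \<open>0 \<le> s\<close>]) simp
  obtain \<kappa> where hol\<kappa>: "\<kappa> holomorphic_on ball b t" and \<psi>\<kappa>: "\<And>w. w \<in> ball b t \<Longrightarrow> \<psi> (\<kappa> w) = w"
    and \<kappa>_im: "\<kappa> ` ball b t = W \<inter> \<psi> -` ball b t"
    using holomorphic_inverse_on_unique_preimages[OF hol\<psi> \<open>open W\<close> open_ball uniq] by blast
  define W' where "W' = W \<inter> \<psi> -` ball b t"
  have "domain W'"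
    unfolding domain_def
  proof (intro conjI)
    show "open W'" unfolding W'_def
      using holomorphic_on_imp_continuous_on[OF hol\<psi>] \<open>open W\<close> open_ball by (rule continuous_open_preimage)
    show "connected W'" "W' \<noteq> {}" unfolding W'_def \<kappa>_im[symmetric]
      using connected_continuous_image[OF holomorphic_on_imp_continuous_on[OF hol\<kappa>]] \<open>0 < t\<close> by auto
  qed
  moreover have "(\<lambda>z. (\<psi> z, z)) ` W' = (\<lambda>w. (w, \<kappa> w)) ` ball b t"
    using graph_image_eq_inverse_graph[OF \<kappa>_im \<psi>\<kappa>] by (simp add: W'_def)
  ultimately show thesis using that hol\<kappa> by (auto simp: W'_def \<psi>_def)
qed

theorem mainTheorem12:
  fixes g :: "complex \<Rightarrow> complex" and \<delta> :: complex and x :: "nat \<Rightarrow> complex"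
    and k :: nat and r R :: real and i l j :: nat and W :: "complex set"
  assumes "g holomorphic_on UNIV"
    and "\<delta> \<noteq> 0"
    and "0 < r" and "r < R" and "cmod \<delta> * r < R - r"
    and "i \<in> {1..k}" and "l \<in> {1..k}" and "j \<in> {1..k}"
    and "domain W" and "W \<subseteq> ball (x i) r"
    and "biholo_onto g W (ball (x j + \<delta> * x l) R)"
  shows "\<forall>D. il_disk x r i l D \<longrightarrow>
           (\<exists>W' V. domain W' \<and> W' \<subseteq> W \<and> V = D \<inter> (W' \<times> UNIV) \<and>
              holo_disk V \<and> V \<subseteq> D \<and>
              il_disk x r j i ((\<lambda>(z, w). (g z - \<delta> * w, z)) ` V))"
proof (intro allI impI)
  fix D assume "il_disk x r i l D"
  then obtain \<phi> where hol\<phi>: "\<phi> holomorphic_on ball (x i) r" and D: "D = (\<lambda>z. (z, \<phi> z)) ` ball (x i) r"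
    and \<phi>_im: "\<phi> ` ball (x i) r \<subseteq> ball (x l) r"
    unfolding il_disk_def by (auto simp: image_image)
  have W: "open W" "W \<subseteq> ball (x i) r" using assms(9,10) by (simp_all add: domain_def)
  have \<phi>_W: "\<phi> ` W \<subseteq> cball (x l) r" using \<phi>_im W(2) ball_subset_cball by blast
  have rR: "r + norm \<delta> * r \<le> R" using assms(5) by simp
  obtain W' \<kappa> where W': "domain W'" "W' \<subseteq> W" and hol\<kappa>: "\<kappa> holomorphic_on ball (x j) r"
    and graph: "(\<lambda>z. (g z - \<delta> * \<phi> z, z)) ` W' = (\<lambda>w. (w, \<kappa> w)) ` ball (x j) r"
    using biholo_onto_graph_transform[OF assms(11) W(1) holomorphic_on_subset[OF hol\<phi> W(2)] \<phi>_W
        less_imp_le[OF assms(3)] assms(3) rR] by blast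
  have V: "D \<inter> (W' \<times> UNIV) = (\<lambda>z. (z, \<phi> z)) ` W'"
    using W' W(2) unfolding D by blast
  have "holo_disk (D \<inter> (W' \<times> UNIV))"
    unfolding holo_disk_def V using W'(1) holomorphic_on_subset[OF hol\<phi> subset_trans[OF W'(2) W(2)]] by blast
  moreover have "il_disk x r j i ((\<lambda>(z, w). (g z - \<delta> * w, z)) ` (D \<inter> (W' \<times> UNIV)))"
    unfolding il_disk_def
  proof (intro exI conjI)
    show "(\<lambda>(z, w). (g z - \<delta> * w, z)) ` (D \<inter> (W' \<times> UNIV)) = (\<lambda>w. (w, \<kappa> w)) ` ball (x j) r"
      unfolding V image_image graph[symmetric] by simp
    then show "snd ` (\<lambda>(z, w). (g z - \<delta> * w, z)) ` (D \<inter> (W' \<times> UNIV)) \<subseteq> ball (x i) r"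
      using W' W(2) unfolding V image_image by auto
  qed (fact hol\<kappa>)
  ultimately show "\<exists>W' V. domain W' \<and> W' \<subseteq> W \<and> V = D \<inter> (W' \<times> UNIV) \<and>
              holo_disk V \<and> V \<subseteq> D \<and> il_disk x r j i ((\<lambda>(z, w). (g z - \<delta> * w, z)) ` V)"
    using W' by blast
qed

end
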